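(* Let $\lambda_1,\lambda_2\ge0$, let $\mathbf m\in\mathcal B(\lambda+\rho)_{res}$ be the head of its resonance family $RF(\mathbf m)$, with decoration $d=d(\mathbf m)>0$ and bounding data $s_2,s_5,s_6$. If $RF(\mathbf m)\cap\mathcal B(\lambda+\rho)=\emptyset$, then $d>\min\{s_2,s_5\}+s_6+2$.
   Context: For $\mathbf m\in\mathbb Z_{\ge0}^6$ and integers $\lambda_1,\lambda_2\ge0$: $s_1=\lambda_2+m_5+m_6-m_1-m_2-m_3$, $s_2=\lambda_2+m_5+m_6-m_2-2m_3$, $s_3=\lambda_2+m_6-m_3-m_4$, $s_4=\lambda_2+m_6-m_4-m_5$, $s_5=\lambda_2-m_5$, $s_6=\lambda_1-m_6$. $\mathcal B(\lambda+\rho)$: all $s_j\ge-1$ and $2s_3-s_4\ge-1$. $\mathcal B(\lambda+\rho)_{res}$: $m_3=m_5$, $s_j\ge-1$ for $j\in\{1,2,5,6\}$, $s_3=s_4\le0$ even; decoration $d(\mathbf m)=-s_3/2$. Weight $k(\mathbf m)=(m_2+3m_3+2m_4+3m_5+m_6,\ m_1+m_2+2m_3+m_4+m_5)$. Arrays $\left[\begin{smallmatrix}a&b&c&b&d\\&x&y&z&\\&&k&&\end{smallmatrix}\right]$ (entries in $\mathbb Z_{\ge0}$) with operators: $e_1$: $(a,c,d;y;k)\mapsto(a-1,c+1,d-1;y+1;k+1)$, zero if $\min\{a,d\}=0$; $e_2$: $(b,c;x,z;k)\mapsto(b-1,c+3;x+1,z+1;k+1)$, zero if $b=0$; $f_1$: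 $(a,c,d;y;k)\mapsto(a+1,c-1,d+1;y-1;k-1)$, zero if $\min\{c,y,k\}=0$; $f_2$: $(b,c;x,z;k)\mapsto(b+1,c-3;x-1,z-1;k-1)$, zero if $\min\{x,z,k\}=0$ or $c<3$ (unlisted entries unchanged; both copies of $b$ change together). $A(\mathbf m)=\left[\begin{smallmatrix}m_2&m_5&m_4&m_5&m_6\\&s_2+1&s_6+1&s_5+1&\\&&d(\mathbf m)&&\end{smallmatrix}\right]$. For an array $A$, $\epsilon_i(A)=\max\{n\ge0:e_i^n(A)\ne0\}$ and $\mathrm{hd}(A)=e_1^{\epsilon_1(A)}e_2^{\epsilon_2(A)}(A)$. On $\mathcal B(\lambda+\rho)_{res}$, $\mathbf m\sim\mathbf n$ iff $k(\mathbf m)=k(\mathbf n)$ and $\mathrm{hd}(A(\mathbf m))=\mathrm{hd}(A(\mathbf n))$; the class of $\mathbf m$ is its resonance family $RF(\mathbf m)$, whose head is the unique element $\mathbf n$ with $A(\mathbf n)=\mathrm{hd}(A(\mathbf n))$. *)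

theory Defs
  imports Main
begin

datatype mv = MV (m1: nat) (m2: nat) (m3: nat) (m4: nat) (m5: nat) (m6: nat)

definition s1 :: "nat \<Rightarrow> nat \<Rightarrow> mv \<Rightarrow> int" where
  "s1 l1 l2 m = int l2 + int (m5 m) + int (m6 m) - int (m1 m) - int (m2 m) - int (m3 m)"
definition s2 :: "nat \<Rightarrow> nat \<Rightarrow> mv \<Rightarrow> int" where
  "s2 l1 l2 m = int l2 + int (m5 m) + int (m6 m) - int (m2 m) - 2 * int (m3 m)"
definition s3 :: "nat \<Rightarrow> nat \<Rightarrow> mv \<Rightarrow> int" where
  "s3 l1 l2 m = int l2 + int (m6 m) - int (m3 m) - int (m4 m)"
definition s4 :: "nat \<Rightarrow> nat \<Rightarrow> mv \<Rightarrow> int" where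
  "s4 l1 l2 m = int l2 + int (m6 m) - int (m4 m) - int (m5 m)"
definition s5 :: "nat \<Rightarrow> nat \<Rightarrow> mv \<Rightarrow> int" where
  "s5 l1 l2 m = int l2 - int (m5 m)"
definition s6 :: "nat \<Rightarrow> nat \<Rightarrow> mv \<Rightarrow> int" where
  "s6 l1 l2 m = int l1 - int (m6 m)"

definition Bset :: "nat \<Rightarrow> nat \<Rightarrow> mv set" where
  "Bset l1 l2 = {m. s1 l1 l2 m \<ge> -1 \<and> s2 l1 l2 m \<ge> -1 \<and> s3 l1 l2 m \<ge> -1 \<and>
                    s4 l1 l2 m \<ge> -1 \<and> s5 l1 l2 m \<ge> -1 \<and> s6 l1 l2 m \<ge> -1 \<and>
                    2 * s3 l1 l2 m - s4 l1 l2 m \<ge> -1}"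

definition Bres :: "nat \<Rightarrow> nat \<Rightarrow> mv set" where
  "Bres l1 l2 = {m. m3 m = m5 m \<and> s1 l1 l2 m \<ge> -1 \<and> s2 l1 l2 m \<ge> -1 \<and>
                    s5 l1 l2 m \<ge> -1 \<and> s6 l1 l2 m \<ge> -1 \<and>
                    s3 l1 l2 m = s4 l1 l2 m \<and> s3 l1 l2 m \<le> 0 \<and> even (s3 l1 l2 m)}"

definition deco :: "nat \<Rightarrow> nat \<Rightarrow> mv \<Rightarrow> int" where
  "deco l1 l2 m = (- s3 l1 l2 m) div 2"

definition wt :: "mv \<Rightarrow> nat \<times> nat" where
  "wt m = (m2 m + 3 * m3 m + 2 * m4 m + 3 * m5 m + m6 m,
           m1 m + m2 m + 2 * m3 m + m4 m + m5 m)"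

section \<open>Arrays [a b c b d; x y z; k] and the operators\<close>

datatype arr = Arr (aa: int) (ab: int) (ac: int) (ad: int) (ax: int) (ay: int) (az: int) (ak: int)

definition e1 :: "arr \<Rightarrow> arr option" where
  "e1 A = (if min (aa A) (ad A) = 0 then None
           else Some (Arr (aa A - 1) (ab A) (ac A + 1) (ad A - 1) (ax A) (ay A + 1) (az A) (ak A + 1)))"

definition e2 :: "arr \<Rightarrow> arr option" where
  "e2 A = (if ab A = 0 then None
           else Some (Arr (aa A) (ab A - 1) (ac A + 3) (ad A) (ax A + 1) (ay A) (az A + 1) (ak A + 1)))"

definition f1 :: "arr \<Rightarrow> arr option" where
  "f1 A = (if min (min (ac A) (ay A)) (ak A) = 0 then None
           else Some (Arr (aa A + 1) (ab A) (ac A - 1) (ad A + 1) (ax A) (ay A - 1) (az A) (ak A - 1)))"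

definition f2 :: "arr \<Rightarrow> arr option" where
  "f2 A = (if min (min (ax A) (az A)) (ak A) = 0 \<or> ac A < 3 then None
           else Some (Arr (aa A) (ab A + 1) (ac A - 3) (ad A) (ax A - 1) (ay A) (az A - 1) (ak A - 1)))"

text \<open>n-fold iteration of a partial operator (None plays the role of 0).\<close>
fun opow :: "(arr \<Rightarrow> arr option) \<Rightarrow> nat \<Rightarrow> arr option \<Rightarrow> arr option" where
  "opow e 0 A = A"
| "opow e (Suc n) A = Option.bind (opow e n A) e"

definition eps :: "(arr \<Rightarrow> arr option) \<Rightarrow> arr \<Rightarrow> nat" where
  "eps e A = (GREATEST n. opow e n (Some A) \<noteq> None)"

definition hd_arr :: "arr \<Rightarrow> arr option" where
  "hd_arr A = opow e1 (eps e1 A) (opow e2 (eps e2 A) (Some A))"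

definition Aof :: "nat \<Rightarrow> nat \<Rightarrow> mv \<Rightarrow> arr" where
  "Aof l1 l2 m = Arr (int (m2 m)) (int (m5 m)) (int (m4 m)) (int (m6 m))
                     (s2 l1 l2 m + 1) (s6 l1 l2 m + 1) (s5 l1 l2 m + 1) (deco l1 l2 m)"

definition res_equiv :: "nat \<Rightarrow> nat \<Rightarrow> mv \<Rightarrow> mv \<Rightarrow> bool" where
  "res_equiv l1 l2 m n \<longleftrightarrow> m \<in> Bres l1 l2 \<and> n \<in> Bres l1 l2 \<and> wt m = wt n \<and>
      hd_arr (Aof l1 l2 m) = hd_arr (Aof l1 l2 n)"

definition RF :: "nat \<Rightarrow> nat \<Rightarrow> mv \<Rightarrow> mv set" where
  "RF l1 l2 m = {n. res_equiv l1 l2 m n}"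

definition is_head :: "nat \<Rightarrow> nat \<Rightarrow> mv \<Rightarrow> bool" where
  "is_head l1 l2 m \<longleftrightarrow> m \<in> Bres l1 l2 \<and> hd_arr (Aof l1 l2 m) = Some (Aof l1 l2 m)"

end

theory Submission imports Defs begin

text \<open>Taking \<open>3a + b\<close> from \<open>m\<^sub>4\<close> and adding \<open>a\<close> to \<open>m\<^sub>3, m\<^sub>5\<close> and
  \<open>b\<close> to \<open>m\<^sub>2, m\<^sub>6\<close> preserves the weight and the head of the array, lowers the decoration by
  \<open>a + b\<close>, and spends \<open>a\<close> of the slack in \<open>s\<^sub>2, s\<^sub>5\<close> and \<open>b\<close> of the slack in \<open>s\<^sub>6\<close>.
  If \<open>d \<le> min{s\<^sub>2, s\<^sub>5} + s\<^sub>6 + 2\<close>, the whole decoration can be spent this way, and the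
  shifted point has \<open>s\<^sub>3 = s\<^sub>4 = 0\<close>, so it lies in the resonance family and in
  \<open>\<B>(\<lambda>+\<rho>)\<close>.\<close>

lemma opow_e2_closed:
  assumes "ab A \<ge> 0"
  shows "opow e2 n (Some A) =
    (if int n \<le> ab A
     then Some (Arr (aa A) (ab A - int n) (ac A + 3 * int n) (ad A)
                    (ax A + int n) (ay A) (az A + int n) (ak A + int n))
     else None)"
proof (induction n)
  case 0 then show ?case using assms by (cases A) auto
next
  case (Suc n) then show ?case by (cases "int n < ab A") (auto simp: e2_def)
qed

lemma opow_e1_closed:
  assumes "aa A \<ge> 0" "ad A \<ge> 0"
  shows "opow e1 n (Some A) =
    (if int n \<le> min (aa A) (ad A)
     then Some (Arr (aa A - int n) (ab A) (ac A + int n) (ad A - int n)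
                    (ax A) (ay A + int n) (az A) (ak A + int n))
     else None)"
proof (induction n)
  case 0 then show ?case using assms by (cases A) auto
next
  case (Suc n) then show ?case by (cases "int n < min (aa A) (ad A)") (auto simp: e1_def)
qed

lemma eps_e2_eq: "ab A \<ge> 0 \<Longrightarrow> eps e2 A = nat (ab A)"
  unfolding eps_def
  by (rule Greatest_equality) (auto simp: opow_e2_closed split: if_splits)

lemma eps_e1_eq: "aa A \<ge> 0 \<Longrightarrow> ad A \<ge> 0 \<Longrightarrow> eps e1 A = nat (min (aa A) (ad A))"
  unfolding eps_def
  by (rule Greatest_equality) (auto simp: opow_e1_closed split: if_splits)

lemma hd_arr_closed:
  assumes "aa A \<ge> 0" "ad A \<ge> 0" "ab A \<ge> 0"
  defines "k \<equiv> min (aa A) (ad A)"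
  shows "hd_arr A = Some (Arr (aa A - k) 0 (ac A + 3 * ab A + k) (ad A - k)
                              (ax A + ab A) (ay A + k) (az A + ab A) (ak A + ab A + k))"
  using assms unfolding hd_arr_def
  by (simp add: eps_e1_eq eps_e2_eq opow_e2_closed opow_e1_closed)

definition shift_mv :: "nat \<Rightarrow> nat \<Rightarrow> mv \<Rightarrow> mv" where
  "shift_mv a b m =
     MV (m1 m) (m2 m + b) (m3 m + a) (m4 m - 3 * a - b) (m5 m + a) (m6 m + b)"

lemma s_shift_mv:
  assumes "3 * a + b \<le> m4 m"
  shows "s1 l1 l2 (shift_mv a b m) = s1 l1 l2 m"
    and "s2 l1 l2 (shift_mv a b m) = s2 l1 l2 m - int a"
    and "s3 l1 l2 (shift_mv a b m) = s3 l1 l2 m + 2 * int (a + b)"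
    and "s4 l1 l2 (shift_mv a b m) = s4 l1 l2 m + 2 * int (a + b)"
    and "s5 l1 l2 (shift_mv a b m) = s5 l1 l2 m - int a"
    and "s6 l1 l2 (shift_mv a b m) = s6 l1 l2 m - int b"
  using assms
  by (simp_all add: shift_mv_def s1_def s2_def s3_def s4_def s5_def s6_def of_nat_diff)

lemma wt_shift_mv: "3 * a + b \<le> m4 m \<Longrightarrow> wt (shift_mv a b m) = wt m"
  by (auto simp: wt_def shift_mv_def)

lemma deco_shift_mv:
  "3 * a + b \<le> m4 m \<Longrightarrow> deco l1 l2 (shift_mv a b m) = deco l1 l2 m - int (a + b)"
  by (simp add: deco_def s_shift_mv(3))

lemma hd_arr_Aof_shift_mv:
  assumes "3 * a + b \<le> m4 m"
  shows "hd_arr (Aof l1 l2 (shift_mv a b m)) = hd_arr (Aof l1 l2 m)"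
proof -
  have "min (int (m2 m + b)) (int (m6 m + b)) = min (int (m2 m)) (int (m6 m)) + int b"
    by auto
  then show ?thesis
    using assms
    by (simp add: hd_arr_closed Aof_def s_shift_mv deco_shift_mv)
       (simp add: shift_mv_def of_nat_diff)
qed

lemma shift_mv_mem_RF:
  assumes "m \<in> Bres l1 l2" "shift_mv a b m \<in> Bres l1 l2" "3 * a + b \<le> m4 m"
  shows "shift_mv a b m \<in> RF l1 l2 m"
  using assms by (simp add: RF_def res_equiv_def wt_shift_mv hd_arr_Aof_shift_mv)

lemma RF_meets_Bset:
  assumes m: "m \<in> Bres l1 l2"
    and small: "deco l1 l2 m \<le> min (s2 l1 l2 m) (s5 l1 l2 m) + s6 l1 l2 m + 2"
  shows "RF l1 l2 m \<inter> Bset l1 l2 \<noteq> {}"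
proof -
  define d where "d = deco l1 l2 m"
  have res: "m3 m = m5 m" "s1 l1 l2 m \<ge> -1" "s2 l1 l2 m \<ge> -1" "s5 l1 l2 m \<ge> -1"
    "s6 l1 l2 m \<ge> -1" "s3 l1 l2 m = s4 l1 l2 m" "s3 l1 l2 m \<le> 0" "even (s3 l1 l2 m)"
    using m by (auto simp: Bres_def)
  have s3_d: "s3 l1 l2 m = - 2 * d"
    using res(8) unfolding d_def deco_def by auto
  define b where "b = nat (min d (s6 l1 l2 m + 1))"
  define a where "a = nat d - b"
  have ab: "int (a + b) = d" "int a \<le> min (s2 l1 l2 m) (s5 l1 l2 m) + 1"
    "int b \<le> s6 l1 l2 m + 1"
    using small res(3-5,7) s3_d unfolding a_def b_def d_def[symmetric] by auto
  have "int (m4 m) = s5 l1 l2 m + int (m6 m) + 2 * d" "int (m6 m) = int l1 - s6 l1 l2 m"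
    using s3_d res(1) by (simp_all add: s3_def s5_def s6_def)
  then have fits: "3 * a + b \<le> m4 m"
    using ab res(4,5) unfolding a_def b_def by linarith
  let ?n = "shift_mv a b m"
  have "m3 ?n = m5 ?n"
    using res(1) by (simp add: shift_mv_def)
  then have "?n \<in> Bres l1 l2" "?n \<in> Bset l1 l2"
    using res ab s3_d by (auto simp: Bres_def Bset_def s_shift_mv[OF fits])
  with shift_mv_mem_RF[OF m _ fits] show ?thesis by blast
qed

theorem mainTheorem9:
  fixes l1 l2 :: nat and m :: mv
  assumes "m \<in> Bres l1 l2"
    and "is_head l1 l2 m"
    and "deco l1 l2 m > 0"
    and "RF l1 l2 m \<inter> Bset l1 l2 = {}"
  shows "deco l1 l2 m > min (s2 l1 l2 m) (s5 l1 l2 m) + s6 l1 l2 m + 2"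
  using RF_meets_Bset[OF assms(1)] assms(4) by fastforce

end
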